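(* For $w>0$, as an identity of formal power series in $z$, \[\mathrm{DAG}(z,w,u)=1+\frac{\mathcal H(z,w,u)}{1-\mathcal H\!\left(z,w,\frac w{1+w}\right)},\qquad\text{where }\ \mathcal H(z,w,u)=z\int_0^u \mathrm{DAG}\!\left(\frac z{1+w},w,t\right)dt.\]
   Context: For a labelled DAG $G$ (directed acyclic graph on vertex set $\{1,\dots,n\}$, $n\ge0$), $v(G),e(G),s(G)$ denote its numbers of vertices, edges and sources (vertices of in-degree $0$). $\mathrm{DAG}(z,w,u)=\sum_G \frac{z^{v(G)}w^{e(G)}u^{s(G)}}{(1+w)^{\binom{v(G)}{2}}v(G)!}$, summed over all labelled DAGs. (It is known that $\mathrm{DAG}(z,w,u)=\mathrm{Set}((u-1)z,w)/\mathrm{Set}(-z,w)$ with $\mathrm{Set}(z,w)=\sum_{n\ge0}\frac{z^n}{(1+w)^{\binom n2}n!}$.) *)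

theory Defs
  imports "HOL-Analysis.Analysis" "HOL-Computational_Algebra.Formal_Power_Series"
begin

definition dags :: "nat \<Rightarrow> (nat \<times> nat) set set" where
  "dags n = {E. E \<subseteq> {1..n} \<times> {1..n} \<and> acyclic E}"

definition sources :: "nat \<Rightarrow> (nat \<times> nat) set \<Rightarrow> nat" where
  "sources n E = card {v \<in> {1..n}. \<not> (\<exists>x. (x, v) \<in> E)}"

text \<open>n-th coefficient (in z) of DAG(z,w,u).\<close>
definition dag_coeff :: "real \<Rightarrow> real \<Rightarrow> nat \<Rightarrow> real" where
  "dag_coeff w u n =
     (\<Sum>E\<in>dags n. w ^ card E * u ^ sources n E) / ((1 + w) ^ (n choose 2) * fact n)"

definition DAG_fps :: "real \<Rightarrow> real \<Rightarrow> real fps" where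
  "DAG_fps w u = Abs_fps (dag_coeff w u)"

text \<open>H(z,w,u) = z * integral_0^u DAG(z/(1+w), w, t) dt, integrated coefficientwise.\<close>
definition H_fps :: "real \<Rightarrow> real \<Rightarrow> real fps" where
  "H_fps w u = fps_X * Abs_fps (\<lambda>n.
     LBINT t=ereal 0..ereal u. fps_nth (DAG_fps w t oo (fps_const (1 / (1 + w)) * fps_X)) n)"

end

theory Submission
  imports Defs
begin

text \<open>
  Deleting a set \<open>S\<close> of sources from a DAG on \<open>V\<close> leaves a DAG on \<open>V - S\<close> together with an
  arbitrary set of edges from \<open>S\<close> to \<open>V - S\<close>. Expanding \<open>(x + 1)\<close> to the number of sources
  as a sum over sets of sources therefore gives \<open>DAG(z, w, x + 1) = Set(x z, w) DAG(z, w, 1)\<close>.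
  At \<open>x = -1\<close> the left side is \<open>DAG(z, w, 0) = 1\<close>, because every nonempty DAG has a source, so
  \<open>DAG(z, w, u) = Set((u - 1) z, w) / Set(-z, w)\<close>. Since the coefficients of \<open>Set(x z, w)\<close>
  satisfy \<open>d/dx Set(x z, w) = z Set(x z / (1 + w), w)\<close>, integration in \<open>u\<close> gives
  \<open>H(z, w, u) = (Set((u - 1) z, w) - Set(-z, w)) DAG(z / (1 + w), w, 1)\<close>, and the theorem
  reduces to an identity between these power series.
\<close>

unbundle no vec_syntax
unbundle fps_syntax

definition dags_on :: "'a set \<Rightarrow> ('a \<times> 'a) set set" where
  "dags_on V = {E. E \<subseteq> V \<times> V \<and> acyclic E}"

definition sources_of :: "'a set \<Rightarrow> ('a \<times> 'a) set \<Rightarrow> 'a set" where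
  "sources_of V E = {v \<in> V. \<nexists>x. (x, v) \<in> E}"

definition dag_weight :: "real \<Rightarrow> real \<Rightarrow> 'a set \<Rightarrow> real" where
  "dag_weight w y V = (\<Sum>E\<in>dags_on V. w ^ card E * y ^ card (sources_of V E))"

lemma dag_coeff_eq_dag_weight:
  "dag_coeff w y n = dag_weight w y {1..n} / ((1 + w) ^ (n choose 2) * fact n)"
  by (simp add: dag_coeff_def dag_weight_def dags_def dags_on_def sources_def sources_of_def)

lemma finite_dags_on: "finite V \<Longrightarrow> finite (dags_on V)"
  by (rule finite_subset[of _ "Pow (V \<times> V)"]) (auto simp: dags_on_def)

lemma sources_of_nonempty:
  assumes "finite V" "V \<noteq> {}" "E \<in> dags_on V"
  shows "sources_of V E \<noteq> {}"
proof -
  have sub: "E \<subseteq> V \<times> V" and "acyclic E" using assms(3) by (auto simp: dags_on_def)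
  moreover have "finite E" using sub assms(1) finite_subset by blast
  ultimately have "wf E" using finite_acyclic_wf by blast
  then obtain z where "z \<in> V" "\<forall>y. (y, z) \<in> E \<longrightarrow> y \<notin> V"
    using assms(2) wf_eq_minimal by (metis ex_in_conv)
  then have "z \<in> sources_of V E" using sub unfolding sources_of_def by blast
  then show ?thesis by blast
qed

lemma acyclic_Un_edges_from_sources:
  assumes "acyclic E" and no_entry: "Domain F \<inter> Range (E \<union> F) = {}"
  shows "acyclic (E \<union> F)"
proof (rule acyclicI, intro allI notI)
  have path: "(x, y) \<in> E\<^sup>+" if "(x, y) \<in> (E \<union> F)\<^sup>+" "x \<notin> Domain F" for x y
    using that
  proof (induction rule: trancl_induct)
    case (step y z)
    then have "y \<in> Range (E \<union> F)" by (metis Range.intros trancl_range)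
    then have "y \<notin> Domain F" using no_entry by blast
    then have "(y, z) \<in> E" using step.hyps(2) by blast
    then show ?case using step by (meson trancl.trancl_into_trancl)
  qed blast
  fix x assume cycle: "(x, x) \<in> (E \<union> F)\<^sup>+"
  then have "x \<in> Range (E \<union> F)" by (metis Range.intros trancl_range)
  then have "x \<notin> Domain F" using no_entry by blast
  then show False using path cycle \<open>acyclic E\<close> unfolding acyclic_def by blast
qed

lemma dags_with_sources_bij:
  assumes "S \<subseteq> V"
  shows "bij_betw (\<lambda>(E, F). E \<union> F) (dags_on (V - S) \<times> Pow (S \<times> (V - S)))
           {E \<in> dags_on V. S \<subseteq> sources_of V E}"
proof (rule bij_betw_byWitness[where f' = "\<lambda>E. (E \<inter> (V - S) \<times> (V - S), E \<inter> S \<times> (V - S))"])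
  show "\<forall>p \<in> dags_on (V - S) \<times> Pow (S \<times> (V - S)).
      (\<lambda>E. (E \<inter> (V - S) \<times> (V - S), E \<inter> S \<times> (V - S))) ((\<lambda>(E, F). E \<union> F) p) = p"
    unfolding dags_on_def by blast
  show "\<forall>E \<in> {E \<in> dags_on V. S \<subseteq> sources_of V E}.
      (\<lambda>(E, F). E \<union> F) (E \<inter> (V - S) \<times> (V - S), E \<inter> S \<times> (V - S)) = E"
    unfolding dags_on_def sources_of_def by blast
  show "(\<lambda>(E, F). E \<union> F) ` (dags_on (V - S) \<times> Pow (S \<times> (V - S)))
      \<subseteq> {E \<in> dags_on V. S \<subseteq> sources_of V E}"
  proof (rule image_subsetI)
    fix p assume "p \<in> dags_on (V - S) \<times> Pow (S \<times> (V - S))"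
    then obtain E F where p: "p = (E, F)" and E: "E \<subseteq> (V - S) \<times> (V - S)" "acyclic E"
      and F: "F \<subseteq> S \<times> (V - S)"
      by (auto simp: dags_on_def)
    then have "acyclic (E \<union> F)" by (intro acyclic_Un_edges_from_sources) blast+
    then show "(\<lambda>(E, F). E \<union> F) p \<in> {E \<in> dags_on V. S \<subseteq> sources_of V E}"
      unfolding p using E F assms by (auto simp: dags_on_def sources_of_def)
  qed
  show "(\<lambda>E. (E \<inter> (V - S) \<times> (V - S), E \<inter> S \<times> (V - S))) ` {E \<in> dags_on V. S \<subseteq> sources_of V E}
      \<subseteq> dags_on (V - S) \<times> Pow (S \<times> (V - S))"
    by (auto simp: dags_on_def intro: acyclic_subset)
qed

lemma sum_Pow_power_card:
  fixes x :: "'a::comm_semiring_1"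
  assumes "finite A"
  shows "(\<Sum>B\<in>Pow A. x ^ card B) = (x + 1) ^ card A"
proof -
  have "(x + 1) ^ card A = (\<Prod>a\<in>A. x + 1)" by simp
  also have "\<dots> = (\<Sum>B\<in>Pow A. (\<Prod>a\<in>B. x) * (\<Prod>a\<in>A - B. 1))" by (rule prod_add[OF assms])
  finally show ?thesis by simp
qed

lemma sum_Pow_by_card:
  fixes f :: "nat \<Rightarrow> 'a::comm_semiring_1"
  assumes "finite V"
  shows "(\<Sum>S\<in>Pow V. f (card S)) = (\<Sum>k\<le>card V. of_nat (card V choose k) * f k)"
proof -
  have "(\<Sum>S\<in>Pow V. f (card S)) = (\<Sum>k\<le>card V. \<Sum>S | S \<in> Pow V \<and> card S = k. f (card S))"
    by (rule sum.group[symmetric]) (use assms in \<open>auto intro: card_mono\<close>)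
  also have "\<dots> = (\<Sum>k\<le>card V. of_nat (card V choose k) * f k)"
  proof (rule sum.cong[OF refl])
    fix k
    have "card {S. S \<in> Pow V \<and> card S = k} = card V choose k"
      using n_subsets[OF assms] by simp
    then show "(\<Sum>S | S \<in> Pow V \<and> card S = k. f (card S)) = of_nat (card V choose k) * f k"
      by simp
  qed
  finally show ?thesis .
qed

lemma sum_dags_with_sources:
  assumes "finite V" "S \<subseteq> V"
  shows "(\<Sum>E | E \<in> dags_on V \<and> S \<subseteq> sources_of V E. w ^ card E)
       = dag_weight w 1 (V - S) * (1 + w) ^ (card S * card (V - S))"
proof -
  have fin: "finite S" "finite (V - S)" using assms finite_subset by auto
  have "(\<Sum>E | E \<in> dags_on V \<and> S \<subseteq> sources_of V E. w ^ card E)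
      = (\<Sum>p\<in>dags_on (V - S) \<times> Pow (S \<times> (V - S)). w ^ card ((\<lambda>(E, F). E \<union> F) p))"
    using sum.reindex_bij_betw[OF dags_with_sources_bij[OF assms(2)], of "\<lambda>E. w ^ card E"] by simp
  also have "\<dots> = (\<Sum>(E, F)\<in>dags_on (V - S) \<times> Pow (S \<times> (V - S)). w ^ card E * w ^ card F)"
  proof (rule sum.cong[OF refl])
    fix p assume "p \<in> dags_on (V - S) \<times> Pow (S \<times> (V - S))"
    then obtain E F where p: "p = (E, F)" and E: "E \<subseteq> (V - S) \<times> (V - S)" and F: "F \<subseteq> S \<times> (V - S)"
      by (auto simp: dags_on_def)
    moreover from E F fin have "finite E" "finite F" by (auto intro: finite_subset)
    moreover from E F have "E \<inter> F = {}" by blast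
    ultimately show "w ^ card ((\<lambda>(E, F). E \<union> F) p) = (\<lambda>(E, F). w ^ card E * w ^ card F) p"
      by (simp add: card_Un_disjoint power_add)
  qed
  also have "\<dots> = (\<Sum>E\<in>dags_on (V - S). w ^ card E) * (\<Sum>F\<in>Pow (S \<times> (V - S)). w ^ card F)"
    unfolding sum_product sum.cartesian_product by (simp add: case_prod_beta)
  also have "\<dots> = dag_weight w 1 (V - S) * (1 + w) ^ (card S * card (V - S))"
    using fin by (simp add: dag_weight_def sum_Pow_power_card card_cartesian_product add.commute)
  finally show ?thesis .
qed

lemma dag_weight_source_expansion:
  assumes "finite V"
  shows "dag_weight w (x + 1) V
       = (\<Sum>S\<in>Pow V. x ^ card S * (1 + w) ^ (card S * card (V - S)) * dag_weight w 1 (V - S))"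
proof -
  have "dag_weight w (x + 1) V
      = (\<Sum>E\<in>dags_on V. \<Sum>S | S \<in> Pow V \<and> S \<subseteq> sources_of V E. w ^ card E * x ^ card S)"
    unfolding dag_weight_def
  proof (rule sum.cong[OF refl])
    fix E
    have "finite (sources_of V E)" using assms by (simp add: sources_of_def)
    moreover have "{S. S \<in> Pow V \<and> S \<subseteq> sources_of V E} = Pow (sources_of V E)"
      by (auto simp: sources_of_def)
    ultimately show "w ^ card E * (x + 1) ^ card (sources_of V E)
        = (\<Sum>S | S \<in> Pow V \<and> S \<subseteq> sources_of V E. w ^ card E * x ^ card S)"
      by (simp add: sum_distrib_left[symmetric] sum_Pow_power_card)
  qed
  also have "\<dots> = (\<Sum>S\<in>Pow V. \<Sum>E | E \<in> dags_on V \<and> S \<subseteq> sources_of V E. w ^ card E * x ^ card S)"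
    by (rule sum.swap_restrict) (use assms finite_dags_on in auto)
  also have "\<dots>
      = (\<Sum>S\<in>Pow V. x ^ card S * (1 + w) ^ (card S * card (V - S)) * dag_weight w 1 (V - S))"
    using assms by (intro sum.cong refl)
      (auto simp: sum_dags_with_sources sum_distrib_right[symmetric] mult_ac)
  finally show ?thesis .
qed

lemma acyclic_map_prod_image:
  assumes "finite E" "acyclic E" "inj_on f (Field E)"
  shows "acyclic (map_prod f f ` E)"
proof -
  have "wf E" using assms(1,2) by (rule finite_acyclic_wf)
  then have "wf (map_prod f f ` E)"
    by (rule wf_map_prod_image_Dom_Ran) (use assms(3) in \<open>auto simp: Field_def dest: inj_onD\<close>)
  then show ?thesis by (rule wf_acyclic)
qed

lemma map_prod_image_in_dags_on:
  assumes "inj_on f V" "finite V" "E \<in> dags_on V"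
  shows "map_prod f f ` E \<in> dags_on (f ` V)"
proof -
  have E: "E \<subseteq> V \<times> V" "acyclic E" using assms(3) by (auto simp: dags_on_def)
  have "finite E" using E(1) assms(2) finite_subset by blast
  moreover have "inj_on f (Field E)"
    using assms(1) by (rule inj_on_subset) (use E(1) in \<open>auto simp: Field_def\<close>)
  ultimately have "acyclic (map_prod f f ` E)" using E(2) acyclic_map_prod_image by blast
  then show ?thesis using E(1) by (auto simp: dags_on_def)
qed

lemma map_prod_image_inverse:
  assumes "\<And>x. x \<in> V \<Longrightarrow> g (f x) = x" "E \<subseteq> V \<times> V"
  shows "map_prod g g ` map_prod f f ` E = E"
proof -
  have "map_prod g g ` map_prod f f ` E = (\<lambda>p. p) ` E"
    unfolding image_image using assms by (intro image_cong) auto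
  then show ?thesis by simp
qed

lemma dags_on_bij:
  assumes "bij_betw f V W" "finite V"
  shows "bij_betw (\<lambda>E. map_prod f f ` E) (dags_on V) (dags_on W)"
proof -
  let ?g = "inv_into V f"
  have f: "inj_on f V" "f ` V = W" using assms(1) by (auto simp: bij_betw_def)
  have g: "inj_on ?g W" "?g ` W = V"
    using bij_betw_inv_into[OF assms(1)] by (auto simp: bij_betw_def)
  have "finite W" using f assms(2) by blast
  show ?thesis
  proof (rule bij_betw_byWitness[where f' = "\<lambda>E. map_prod ?g ?g ` E"])
    show "\<forall>E\<in>dags_on V. map_prod ?g ?g ` map_prod f f ` E = E"
    proof
      fix E assume "E \<in> dags_on V"
      then have "E \<subseteq> V \<times> V" by (simp add: dags_on_def)
      then show "map_prod ?g ?g ` map_prod f f ` E = E"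
        by (rule map_prod_image_inverse[rotated]) (use f in \<open>auto intro: inv_into_f_f\<close>)
    qed
    show "\<forall>E\<in>dags_on W. map_prod f f ` map_prod ?g ?g ` E = E"
    proof
      fix E assume "E \<in> dags_on W"
      then have "E \<subseteq> W \<times> W" by (simp add: dags_on_def)
      then show "map_prod f f ` map_prod ?g ?g ` E = E"
        by (rule map_prod_image_inverse[rotated]) (use f in \<open>auto intro: f_inv_into_f\<close>)
    qed
    show "(\<lambda>E. map_prod f f ` E) ` dags_on V \<subseteq> dags_on W"
      using map_prod_image_in_dags_on[OF f(1) assms(2)] unfolding f(2) by blast
    show "(\<lambda>E. map_prod ?g ?g ` E) ` dags_on W \<subseteq> dags_on V"
      using map_prod_image_in_dags_on[OF g(1) \<open>finite W\<close>] unfolding g(2) by blast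
  qed
qed

lemma dag_weight_bij_eq:
  assumes "bij_betw f V W" "finite V"
  shows "dag_weight w y W = dag_weight w y V"
proof -
  have f: "inj_on f V" "f ` V = W" using assms(1) by (auto simp: bij_betw_def)
  have "card (map_prod f f ` E) = card E
      \<and> card (sources_of W (map_prod f f ` E)) = card (sources_of V E)"
    if "E \<in> dags_on V" for E
  proof -
    have E: "E \<subseteq> V \<times> V" using that by (simp add: dags_on_def)
    then have "inj_on (map_prod f f) E"
      using map_prod_inj_on[OF f(1) f(1)] inj_on_subset by blast
    moreover have "sources_of W (map_prod f f ` E) = f ` sources_of V E"
      using E f unfolding sources_of_def by (auto simp: inj_on_eq_iff)
    moreover have "inj_on f (sources_of V E)"
      using f(1) by (rule inj_on_subset) (simp add: sources_of_def)
    ultimately show ?thesis by (simp add: card_image)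
  qed
  then show ?thesis
    unfolding dag_weight_def sum.reindex_bij_betw[OF dags_on_bij[OF assms], symmetric]
    by (intro sum.cong) auto
qed

lemma dag_weight_eq_interval:
  assumes "finite V"
  shows "dag_weight w y V = dag_weight w y {1..card V}"
proof -
  obtain f where "bij_betw f V {1..card V}"
    using finite_same_card_bij[OF assms, of "{1..card V}"] by auto
  from dag_weight_bij_eq[OF this assms] show ?thesis by simp
qed

lemma dag_weight_no_sources:
  assumes "finite V" "V \<noteq> {}"
  shows "dag_weight w 0 V = 0"
  unfolding dag_weight_def
proof (rule sum.neutral, rule ballI)
  fix E assume "E \<in> dags_on V"
  then have "card (sources_of V E) \<noteq> 0"
    using sources_of_nonempty[OF assms] assms(1) by (simp add: sources_of_def)
  then show "w ^ card E * 0 ^ card (sources_of V E) = 0" by simp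
qed

lemma DAG_fps_no_sources: "DAG_fps w 0 = 1"
proof (rule fps_ext)
  fix n
  show "DAG_fps w 0 $ n = 1 $ n"
  proof (cases "n = 0")
    case True
    have dags_empty: "dags_on {} = {{}}" by (auto simp: dags_on_def acyclic_def)
    show ?thesis
      using True
      by (simp add: DAG_fps_def dag_coeff_eq_dag_weight dag_weight_def dags_empty sources_of_def
          binomial_eq_0)
  next
    case False
    then show ?thesis by (simp add: DAG_fps_def dag_coeff_eq_dag_weight dag_weight_no_sources)
  qed
qed

text \<open>\<open>Set_fps w x\<close> is \<open>Set(x z, w)\<close> as a power series in \<open>z\<close>.\<close>
definition Set_fps :: "real \<Rightarrow> real \<Rightarrow> real fps" where
  "Set_fps w x = Abs_fps (\<lambda>k. x ^ k / ((1 + w) ^ (k choose 2) * fact k))"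

lemma Set_fps_nth_0 [simp]: "Set_fps w x $ 0 = 1"
  by (simp add: Set_fps_def binomial_eq_0)

lemma Set_fps_compose_scale: "Set_fps w x oo (fps_const c * fps_X) = Set_fps w (c * x)"
  by (rule fps_ext) (simp add: Set_fps_def power_mult_distrib)

lemma choose_two_Suc: "Suc n choose 2 = n + (n choose 2)"
  using binomial_Suc_Suc[of n 1] by (simp add: numeral_2_eq_2)

lemma choose_two_add: "(k + m) choose 2 = (k choose 2) + (m choose 2) + k * m"
  by (induction m) (simp_all add: choose_two_Suc)

lemma graphic_factorial_split:
  fixes q :: "'a::{comm_semiring_1, semiring_char_0}"
  assumes "k \<le> n"
  shows "q ^ (n choose 2) * fact n
       = of_nat (n choose k) * q ^ (k * (n - k))
         * (q ^ (k choose 2) * fact k) * (q ^ ((n - k) choose 2) * fact (n - k))"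
proof -
  obtain m where n: "n = k + m" using assms le_Suc_ex by blast
  have "(fact n :: 'a) = of_nat (fact k * fact (n - k) * (n choose k))"
    by (simp only: binomial_fact_lemma[OF assms] of_nat_fact)
  then show ?thesis by (simp add: n choose_two_add power_add mult_ac)
qed

lemma DAG_fps_source_expansion:
  assumes "1 + w \<noteq> 0"
  shows "DAG_fps w (x + 1) = Set_fps w x * DAG_fps w 1"
proof (rule fps_ext)
  fix n
  define \<gamma> where "\<gamma> m = (1 + w) ^ (m choose 2) * fact m" for m :: nat
  have \<gamma>_nonzero: "\<gamma> m \<noteq> 0" for m using assms by (simp add: \<gamma>_def)
  have weight_one: "dag_weight w 1 {1..m} = \<gamma> m * DAG_fps w 1 $ m" for m
    using \<gamma>_nonzero by (simp add: DAG_fps_def dag_coeff_eq_dag_weight \<gamma>_def)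
  have "dag_weight w (x + 1) {1..n}
      = (\<Sum>S\<in>Pow {1..n}. (\<lambda>k. x ^ k * (1 + w) ^ (k * (n - k)) * dag_weight w 1 {1..n - k}) (card S))"
    unfolding dag_weight_source_expansion[OF finite_atLeastAtMost]
  proof (rule sum.cong[OF refl])
    fix S assume "S \<in> Pow {1..n}"
    then have "card ({1..n} - S) = n - card S" by (simp add: card_Diff_subset finite_subset)
    then show "x ^ card S * (1 + w) ^ (card S * card ({1..n} - S)) * dag_weight w 1 ({1..n} - S)
        = (\<lambda>k. x ^ k * (1 + w) ^ (k * (n - k)) * dag_weight w 1 {1..n - k}) (card S)"
      using dag_weight_eq_interval[of "{1..n} - S"] by simp
  qed
  also have "\<dots>
      = (\<Sum>k\<le>n. of_nat (n choose k) * (x ^ k * (1 + w) ^ (k * (n - k)) * dag_weight w 1 {1..n - k}))"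
    using sum_Pow_by_card[of "{1..n}"] by simp
  also have "\<dots> = \<gamma> n * (\<Sum>k\<le>n. x ^ k / \<gamma> k * DAG_fps w 1 $ (n - k))"
    unfolding sum_distrib_left
  proof (rule sum.cong[OF refl])
    fix k assume "k \<in> {..n}"
    then have "\<gamma> n = of_nat (n choose k) * (1 + w) ^ (k * (n - k)) * \<gamma> k * \<gamma> (n - k)"
      unfolding \<gamma>_def by (intro graphic_factorial_split) simp
    then show "of_nat (n choose k) * (x ^ k * (1 + w) ^ (k * (n - k)) * dag_weight w 1 {1..n - k})
        = \<gamma> n * (x ^ k / \<gamma> k * DAG_fps w 1 $ (n - k))"
      using \<gamma>_nonzero[of k] unfolding weight_one by (simp add: field_simps)
  qed
  finally have "DAG_fps w (x + 1) $ n = (\<Sum>k\<le>n. x ^ k / \<gamma> k * DAG_fps w 1 $ (n - k))"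
    using \<gamma>_nonzero[of n] by (simp add: DAG_fps_def dag_coeff_eq_dag_weight \<gamma>_def)
  also have "\<dots> = (Set_fps w x * DAG_fps w 1) $ n"
    by (simp add: fps_mult_nth atLeast0AtMost Set_fps_def \<gamma>_def)
  finally show "DAG_fps w (x + 1) $ n = (Set_fps w x * DAG_fps w 1) $ n" .
qed

lemma Set_fps_minus_one_mult_DAG_fps_one:
  assumes "1 + w \<noteq> 0"
  shows "Set_fps w (-1) * DAG_fps w 1 = 1"
  using DAG_fps_source_expansion[OF assms, of "-1"] by (simp add: DAG_fps_no_sources)

lemma DAG_fps_eq_Set_fps:
  assumes "1 + w \<noteq> 0"
  shows "DAG_fps w u = Set_fps w (u - 1) * DAG_fps w 1"
  using DAG_fps_source_expansion[OF assms, of "u - 1"] by simp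

lemma Set_fps_nth_Suc_has_derivative:
  assumes "1 + w \<noteq> 0"
  shows "((\<lambda>x. Set_fps w x $ Suc n) has_real_derivative Set_fps w (x / (1 + w)) $ n) (at x)"
proof -
  have denominator: "(1 + w) ^ (Suc n choose 2) * fact (Suc n)
      = of_nat (Suc n) * ((1 + w) ^ n * ((1 + w) ^ (n choose 2) * fact n))"
    by (simp add: choose_two_Suc power_add fact_Suc mult_ac del: of_nat_Suc)
  have "of_nat (Suc n) * x ^ n / ((1 + w) ^ (Suc n choose 2) * fact (Suc n))
      = x ^ n / ((1 + w) ^ n * ((1 + w) ^ (n choose 2) * fact n))"
    unfolding denominator by (rule mult_divide_mult_cancel_left) simp
  also have "\<dots> = Set_fps w (x / (1 + w)) $ n"
    by (simp add: Set_fps_def power_divide)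
  finally have derivative: "of_nat (Suc n) * x ^ n / ((1 + w) ^ (Suc n choose 2) * fact (Suc n))
      = Set_fps w (x / (1 + w)) $ n" .
  have "((\<lambda>x. x ^ Suc n / ((1 + w) ^ (Suc n choose 2) * fact (Suc n))) has_real_derivative
      of_nat (Suc n) * x ^ n / ((1 + w) ^ (Suc n choose 2) * fact (Suc n))) (at x)"
    by (rule DERIV_cdivide[OF DERIV_pow[of "Suc n", unfolded diff_Suc_Suc diff_zero]])
  then show ?thesis unfolding derivative by (simp add: Set_fps_def)
qed

lemma Set_fps_mult_nth_Suc_has_derivative:
  assumes "1 + w \<noteq> 0"
  shows "((\<lambda>x. (Set_fps w x * B) $ Suc n) has_real_derivative
      (Set_fps w (x / (1 + w)) * B) $ n) (at x)"
proof -
  have coeff: "(Set_fps w x * B) $ Suc n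
      = B $ Suc n + (\<Sum>i\<le>n. Set_fps w x $ Suc i * B $ (n - i))" for x
    unfolding fps_mult_nth atLeast0AtMost sum.atMost_Suc_shift by simp
  have "((\<lambda>x. B $ Suc n + (\<Sum>i\<le>n. Set_fps w x $ Suc i * B $ (n - i))) has_real_derivative
      0 + (\<Sum>i\<le>n. Set_fps w (x / (1 + w)) $ i * B $ (n - i))) (at x)"
    by (intro DERIV_add DERIV_const DERIV_sum DERIV_cmult_right
        Set_fps_nth_Suc_has_derivative assms)
  then show ?thesis unfolding coeff by (simp add: fps_mult_nth atLeast0AtMost)
qed

lemma H_fps_eq:
  assumes "1 + w \<noteq> 0"
  shows "H_fps w u
       = (Set_fps w (u - 1) - Set_fps w (-1)) * (DAG_fps w 1 oo fps_const (1 / (1 + w)) * fps_X)"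
proof -
  define B where "B = DAG_fps w 1 oo fps_const (1 / (1 + w)) * fps_X"
  have integrand: "DAG_fps w t oo fps_const (1 / (1 + w)) * fps_X
      = Set_fps w ((t - 1) / (1 + w)) * B" for t
    by (simp add: B_def DAG_fps_eq_Set_fps[OF assms, of t] fps_compose_mult_distrib
        Set_fps_compose_scale)
  have integral: "(LBINT t=ereal 0..ereal u. (Set_fps w ((t - 1) / (1 + w)) * B) $ n)
      = (Set_fps w (u - 1) * B) $ Suc n - (Set_fps w (-1) * B) $ Suc n" for n
  proof -
    have "(LBINT t=ereal 0..ereal u. (Set_fps w ((t - 1) / (1 + w)) * B) $ n)
        = (\<lambda>t. (Set_fps w (t - 1) * B) $ Suc n) u - (\<lambda>t. (Set_fps w (t - 1) * B) $ Suc n) 0"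
    proof (rule interval_integral_FTC_finite)
      show "continuous_on {min 0 u..max 0 u} (\<lambda>t. (Set_fps w ((t - 1) / (1 + w)) * B) $ n)"
        unfolding fps_mult_nth Set_fps_def fps_nth_Abs_fps
        using assms by (intro continuous_intros) auto
      fix t
      have "((\<lambda>t. (Set_fps w (t - 1) * B) $ Suc n) has_real_derivative
          (Set_fps w ((t - 1) / (1 + w)) * B) $ n * 1) (at t within {min 0 u..max 0 u})"
        by (rule DERIV_chain2[OF Set_fps_mult_nth_Suc_has_derivative[OF assms]])
          (auto intro!: derivative_eq_intros)
      then show "((\<lambda>t. (Set_fps w (t - 1) * B) $ Suc n) has_vector_derivative
          (Set_fps w ((t - 1) / (1 + w)) * B) $ n) (at t within {min 0 u..max 0 u})"
        by (simp add: has_real_derivative_iff_has_vector_derivative)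
    qed
    then show ?thesis by simp
  qed
  show ?thesis
    unfolding B_def[symmetric]
  proof (rule fps_ext)
    fix n
    show "H_fps w u $ n = ((Set_fps w (u - 1) - Set_fps w (-1)) * B) $ n"
    proof (cases n)
      case 0
      then show ?thesis by (simp add: H_fps_def)
    next
      case (Suc m)
      then show ?thesis
        unfolding H_fps_def integrand by (simp add: integral left_diff_distrib)
    qed
  qed
qed

lemma fps_one_plus_divide_one_minus:
  fixes A M N D E :: "'a::field fps"
  assumes MD: "M * D = 1" and NE: "N * E = 1"
  shows "1 + (A - M) * E / (1 - (N - M) * E) = A * D"
proof -
  have denominator: "1 - (N - M) * E = M * E"
    using NE by (simp add: algebra_simps)
  have "M * E * (N * D) = (M * D) * (N * E)"
    by (simp only: ac_simps)
  then have unit: "M * E * (N * D) = 1"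
    using MD NE by simp
  then have unit_0: "(M * E) $ 0 \<noteq> 0"
    by (metis fps_mult_nth_0 fps_one_nth mult_zero_left zero_neq_one)
  have "(A - M) * E / (1 - (N - M) * E) = (A - M) * E * (N * D)"
    unfolding denominator fps_divide_unit[OF unit_0] fps_inverse_unique[OF unit] by (rule refl)
  also have "\<dots> = (A - M) * D * (N * E)"
    by (simp add: ac_simps)
  also have "\<dots> = A * D - 1"
    using MD NE by (simp add: algebra_simps)
  finally show ?thesis by simp
qed

theorem lemma10:
  fixes w u :: real
  assumes "w > 0"
  shows "DAG_fps w u = 1 + H_fps w u / (1 - H_fps w (w / (1 + w)))"
proof -
  have w: "1 + w \<noteq> 0" using assms by simp
  define c where "c = fps_const (1 / (1 + w)) * fps_X"
  have "w / (1 + w) - 1 = -1 / (1 + w)" using w by (simp add: field_simps)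
  then have H_at_denominator: "H_fps w (w / (1 + w))
      = (Set_fps w (-1 / (1 + w)) - Set_fps w (-1)) * (DAG_fps w 1 oo c)"
    by (simp add: H_fps_eq[OF w] c_def)
  have "(Set_fps w (-1) * DAG_fps w 1) oo c = 1"
    by (simp add: Set_fps_minus_one_mult_DAG_fps_one[OF w])
  then have "Set_fps w (-1 / (1 + w)) * (DAG_fps w 1 oo c) = 1"
    by (simp add: c_def fps_compose_mult_distrib Set_fps_compose_scale)
  from fps_one_plus_divide_one_minus[OF Set_fps_minus_one_mult_DAG_fps_one[OF w] this]
  show ?thesis
    by (simp only: H_fps_eq[OF w, of u] H_at_denominator DAG_fps_eq_Set_fps[OF w, of u] c_def)
qed

end
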